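(* Fix an integer $m\ge 1$ and consider multiple-choice questions $x$ with $m$ answer options, drawn at random, each with a unique correct answer $y^\star\in\{1,\dots,m\}$. Let $C(x)\subseteq\{1,\dots,m\}$ be a (random) prediction set, let $\nu(x)=|C(x)|$, and let $\hat y'$ denote the final answer produced by the revision procedure (CROQ) described in the context, where a final answer can be correct only if $y^\star\in C(x)$ and $\nu(x)\ge 1$. Let $a=\Pr(\hat y=y^\star)$ be the accuracy of the original single-round answer $\hat y$, and for $k=1,\dots,m$ define $r_k=\Pr(\nu(x)=k)$, $\rho_k=\Pr(y^\star\in C(x)\mid \nu(x)=k)$ and $f_{\mathrm{post}}(k)=\Pr(\hat y'=y^\star\mid \nu(x)=k,\ y^\star\in C(x))$. Then: (1) The change in accuracy due to CROQ equals $$\Delta(f_{\mathrm{post}},\alpha,a):=\Pr(\hat y'=y^\star)-a=\sum_{k=1}^m r_k\rho_k f_{\mathrm{post}}(k)-a.$$ (2) A sufficient condition for $\Delta(f_{\mathrm{post}},\alpha,a)>0$ is that $r_k\rho_k>\dfrac{a}{m\,f_{\mathrm{post}}(k)}$ for all $1\le k\le m$. (3) Suppose the function $f_{\mathrm{post}}$ is held fixed and is monotonically decreasing in $k$. Then among all collections of pairs $\{(r_k,\rho_k)\}_{k=1}^m$ with $r_k\ge 0$, $\rho_k\in[0,1]$, $\sum_{k=1}^m r_k\le 1$ and $1-\alpha\le\sum_{k=1}^m r_k\rho_k\le 1$, the quantity $\sum_{k=1}^m r_k\rho_k f_{\mathrm{post}}(k)-a$ is maximized by the greedy choice that makes $r_1\rho_1$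 as large as possible, then $r_2\rho_2$ as large as possible given that, and so on; in particular the maximizer satisfies $r_1\rho_1\ge r_2\rho_2\ge\cdots\ge r_m\rho_m$.
   Context: Setting (conformal revision of questions, CROQ): an LLM answers a multiple-choice question $x$ with $m$ options; its standard answer $\hat y$ is the option with the highest softmax score over the option-key tokens. A conformal prediction set $C(x)=\{y: g(x,y)\ge\hat\tau_\alpha\}$ is computed from a score function $g$ and a threshold $\hat\tau_\alpha$ calibrated by split conformal prediction at miscoverage level $\alpha\in[0,1]$, so that $\Pr(y^\star\in C(x))\ge 1-\alpha$. CROQ then rewrites the question keeping only the options in $C(x)$ (relabelled) and takes the LLM's answer $\hat y'$ to the revised question; thus the final answer is an element of $C(x)$ and is correct only when $y^\star\in C(x)$ (empty sets never yield a correct answer). The parameter $\alpha$ enters only through the constraint $\sum_k r_k\rho_k\ge 1-\alpha$ on the coverage. *)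

theory Defs
  imports "HOL-Probability.Probability"
begin

text \<open>Elementary conditional probability Pr(A | B) = Pr(A \<inter> B) / Pr(B)
  (with the Isabelle convention x / 0 = 0 when Pr(B) = 0).\<close>
definition cprob :: "'a measure \<Rightarrow> 'a set \<Rightarrow> 'a set \<Rightarrow> real" where
  "cprob M A B = measure M (A \<inter> B) / measure M B"

definition croq_r :: "'a measure \<Rightarrow> ('a \<Rightarrow> nat set) \<Rightarrow> nat \<Rightarrow> real" where
  "croq_r M C k = measure M {\<omega> \<in> space M. card (C \<omega>) = k}"

definition croq_rho :: "'a measure \<Rightarrow> ('a \<Rightarrow> nat set) \<Rightarrow> ('a \<Rightarrow> nat) \<Rightarrow> nat \<Rightarrow> real" where
  "croq_rho M C ystar k =
     cprob M {\<omega> \<in> space M. ystar \<omega> \<in> C \<omega>} {\<omega> \<in> space M. card (C \<omega>) = k}"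

definition croq_fpost ::
  "'a measure \<Rightarrow> ('a \<Rightarrow> nat set) \<Rightarrow> ('a \<Rightarrow> nat) \<Rightarrow> ('a \<Rightarrow> nat) \<Rightarrow> nat \<Rightarrow> real" where
  "croq_fpost M C ystar yfin k =
     cprob M {\<omega> \<in> space M. yfin \<omega> = ystar \<omega>}
             {\<omega> \<in> space M. card (C \<omega>) = k \<and> ystar \<omega> \<in> C \<omega>}"

definition croq_acc :: "'a measure \<Rightarrow> ('a \<Rightarrow> nat) \<Rightarrow> ('a \<Rightarrow> nat) \<Rightarrow> real" where
  "croq_acc M ystar yhat = measure M {\<omega> \<in> space M. yhat \<omega> = ystar \<omega>}"

definition croq_feasible :: "nat \<Rightarrow> real \<Rightarrow> (nat \<Rightarrow> real) \<Rightarrow> (nat \<Rightarrow> real) \<Rightarrow> bool" where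
  "croq_feasible m \<alpha> r \<rho> \<longleftrightarrow>
     (\<forall>k\<in>{1..m}. 0 \<le> r k \<and> 0 \<le> \<rho> k \<and> \<rho> k \<le> 1) \<and>
     (\<Sum>k=1..m. r k) \<le> 1 \<and>
     1 - \<alpha> \<le> (\<Sum>k=1..m. r k * \<rho> k) \<and> (\<Sum>k=1..m. r k * \<rho> k) \<le> 1"

definition croq_greedy :: "nat \<Rightarrow> real \<Rightarrow> (nat \<Rightarrow> real) \<Rightarrow> (nat \<Rightarrow> real) \<Rightarrow> bool" where
  "croq_greedy m \<alpha> r \<rho> \<longleftrightarrow>
     croq_feasible m \<alpha> r \<rho> \<and>
     (\<forall>k\<in>{1..m}. \<forall>r' \<rho>'. croq_feasible m \<alpha> r' \<rho>' \<and>
         (\<forall>j\<in>{1..<k}. r' j * \<rho>' j = r j * \<rho> j) \<longrightarrow> r' k * \<rho>' k \<le> r k * \<rho> k)"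

end

theory Submission
  imports Defs
begin

text \<open>Splitting the event of a correct final answer according to the size k of the prediction
  set, and using that it forces coverage, the chain rule gives
  Pr(y' = y*) = sum_k Pr(nu = k) Pr(y* in C | nu = k) Pr(y' = y* | nu = k, y* in C),
  which is (1); (2) follows by comparing each summand with a/m.
  In (3) the products q_k = r_k rho_k are only constrained by q_k \<ge> 0 and sum_k q_k \<le> 1
  (for \<alpha> \<ge> 0 the coverage bound 1 - \<alpha> is met as soon as sum_k q_k = 1), so the greedy choice
  is q = (1, 0, ..., 0). Since f_post is decreasing, every feasible q yields
  sum_k q_k f_post(k) \<le> f_post(1) sum_k q_k \<le> f_post(1), the greedy value.\<close>

lemma pred_eval_countable:
  fixes g :: "'a \<Rightarrow> 'i::countable"
  assumes "g \<in> M \<rightarrow>\<^sub>M count_space UNIV" and "\<And>i. Measurable.pred M (P i)"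
  shows "Measurable.pred M (\<lambda>\<omega>. P (g \<omega>) \<omega>)"
  using assms by (rule measurable_compose_countable[rotated])

lemma pred_eq_count_space:
  fixes f g :: "'a \<Rightarrow> 'i::countable"
  assumes [measurable]: "f \<in> M \<rightarrow>\<^sub>M count_space UNIV" "g \<in> M \<rightarrow>\<^sub>M count_space UNIV"
  shows "Measurable.pred M (\<lambda>\<omega>. f \<omega> = g \<omega>)"
  by (rule pred_eval_countable[where P = "\<lambda>i \<omega>. f \<omega> = i"]) measurable

lemma pred_mem_count_space:
  fixes g :: "'a \<Rightarrow> 'i::countable" and C :: "'a \<Rightarrow> 'i set"
  assumes [measurable]: "g \<in> M \<rightarrow>\<^sub>M count_space UNIV" "C \<in> M \<rightarrow>\<^sub>M count_space UNIV"
  shows "Measurable.pred M (\<lambda>\<omega>. g \<omega> \<in> C \<omega>)"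
  by (rule pred_eval_countable[where P = "\<lambda>i \<omega>. i \<in> C \<omega>"], measurable)
    (rule measurable_compose[OF _ measurable_count_space], measurable)

lemma cprob_nonneg: "0 \<le> cprob M A B"
  by (simp add: cprob_def)

lemma measure_mult_cprob:
  assumes "finite_measure M" and "B \<in> sets M"
  shows "measure M B * cprob M A B = measure M (A \<inter> B)"
proof (cases "measure M B = 0")
  case True
  have "measure M (A \<inter> B) \<le> measure M B"
    using assms by (intro finite_measure.finite_measure_mono) auto
  with True show ?thesis by (simp add: cprob_def measure_nonneg antisym)
qed (simp add: cprob_def)

lemma croq_r_rho_fpost:
  assumes "finite_measure M"
    and size: "{\<omega> \<in> space M. card (C \<omega>) = k} \<in> sets M"
    and covered: "{\<omega> \<in> space M. ystar \<omega> \<in> C \<omega>} \<in> sets M"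
  shows "croq_r M C k * croq_rho M C ystar k * croq_fpost M C ystar yfin k =
    measure M {\<omega> \<in> space M. yfin \<omega> = ystar \<omega> \<and> card (C \<omega>) = k \<and> ystar \<omega> \<in> C \<omega>}"
proof -
  let ?J = "{\<omega> \<in> space M. card (C \<omega>) = k \<and> ystar \<omega> \<in> C \<omega>}"
  have J: "?J = {\<omega> \<in> space M. ystar \<omega> \<in> C \<omega>} \<inter> {\<omega> \<in> space M. card (C \<omega>) = k}"
    by auto
  have "croq_r M C k * croq_rho M C ystar k = measure M ?J"
    unfolding croq_r_def croq_rho_def J by (rule measure_mult_cprob[OF assms(1) size])
  moreover have "measure M ?J * croq_fpost M C ystar yfin k =
      measure M ({\<omega> \<in> space M. yfin \<omega> = ystar \<omega>} \<inter> ?J)"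
    unfolding croq_fpost_def using size covered
    by (intro measure_mult_cprob[OF assms(1)]) (auto simp: J)
  ultimately show ?thesis by (simp add: Int_def conj_ac)
qed

lemma croq_prob_correct_eq_sum:
  assumes "prob_space M"
    and [measurable]: "ystar \<in> M \<rightarrow>\<^sub>M count_space UNIV" "yfin \<in> M \<rightarrow>\<^sub>M count_space UNIV"
      "C \<in> M \<rightarrow>\<^sub>M count_space UNIV"
    and range: "\<forall>\<omega>\<in>space M. C \<omega> \<subseteq> {1..m}"
    and correct_covered: "\<forall>\<omega>\<in>space M. yfin \<omega> = ystar \<omega> \<longrightarrow> ystar \<omega> \<in> C \<omega> \<and> 1 \<le> card (C \<omega>)"
  shows "measure M {\<omega> \<in> space M. yfin \<omega> = ystar \<omega>} =
    (\<Sum>k=1..m. croq_r M C k * croq_rho M C ystar k * croq_fpost M C ystar yfin k)"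
proof -
  interpret prob_space M by fact
  have [measurable]: "Measurable.pred M (\<lambda>\<omega>. yfin \<omega> = ystar \<omega>)"
    "Measurable.pred M (\<lambda>\<omega>. ystar \<omega> \<in> C \<omega>)"
    by (simp_all add: pred_eq_count_space pred_mem_count_space)
  have size_le: "card (C \<omega>) \<le> m" if "\<omega> \<in> space M" for \<omega>
    using card_mono[of "{1..m}" "C \<omega>"] range that by auto
  have "measure M {\<omega> \<in> space M. yfin \<omega> = ystar \<omega>} =
      (\<Sum>k=1..m. measure M {\<omega> \<in> space M. yfin \<omega> = ystar \<omega> \<and> card (C \<omega>) = k \<and> ystar \<omega> \<in> C \<omega>})"
    using correct_covered size_le by (intro prob_sum AE_I2) auto
  also have "\<dots> = (\<Sum>k=1..m. croq_r M C k * croq_rho M C ystar k * croq_fpost M C ystar yfin k)"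
    by (intro sum.cong refl croq_r_rho_fpost[symmetric] finite_measure_axioms) measurable
  finally show ?thesis .
qed

lemma sum_mult_gt_if_gt_divide_card:
  fixes a :: real and f q :: "'a \<Rightarrow> real"
  assumes "finite K" and "K \<noteq> {}"
    and "\<And>k. k \<in> K \<Longrightarrow> 0 < f k \<and> a / (real (card K) * f k) < q k"
  shows "a < (\<Sum>k\<in>K. q k * f k)"
proof -
  have "a / card K < q k * f k" if "k \<in> K" for k
  proof -
    have "a / card K = a / (real (card K) * f k) * f k"
      using assms(3)[OF that] by simp
    also have "\<dots> < q k * f k"
      using assms(3)[OF that] by (intro mult_strict_right_mono) auto
    finally show ?thesis .
  qed
  then have "(\<Sum>k\<in>K. a / card K) < (\<Sum>k\<in>K. q k * f k)"
    using assms(1,2) by (intro sum_strict_mono) auto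
  then show ?thesis
    using assms(1,2) by simp
qed

lemma sum_nonneg_le_member_imp_zero:
  fixes q :: "'a \<Rightarrow> 'b::ordered_ab_group_add"
  assumes "finite K" and "\<And>j. j \<in> K \<Longrightarrow> 0 \<le> q j" and "k \<in> K" and "sum q K \<le> q k"
    and "j \<in> K" and "j \<noteq> k"
  shows "q j = 0"
proof -
  have "q k + q j \<le> q k + (q j + sum q (K - {k} - {j}))"
    using assms by (intro add_left_mono add_increasing2 sum_nonneg) auto
  also have "\<dots> = sum q K"
    using assms(1,3,5,6) sum.remove[of K k q] sum.remove[of "K - {k}" j q] by simp
  finally have "q k + q j \<le> q k"
    using assms(4) by (rule order.trans)
  then have "q j \<le> 0"
    using add_le_cancel_left[of "q k" "q j" 0] by simp
  then show ?thesis
    using assms(2,5) by (simp add: order.antisym)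
qed

lemma sum_mult_le_bound:
  fixes q f :: "'a \<Rightarrow> real"
  assumes "finite K" and "\<And>k. k \<in> K \<Longrightarrow> 0 \<le> q k \<and> f k \<le> c" and "sum q K \<le> 1" and "0 \<le> c"
  shows "(\<Sum>k\<in>K. q k * f k) \<le> c"
proof -
  have "(\<Sum>k\<in>K. q k * f k) \<le> (\<Sum>k\<in>K. q k * c)"
    using assms(2) by (intro sum_mono mult_left_mono) auto
  also have "\<dots> = sum q K * c"
    by (simp add: sum_distrib_right)
  also have "\<dots> \<le> c"
    using mult_right_mono[OF assms(3,4)] by simp
  finally show ?thesis .
qed

lemma croq_feasible_products:
  assumes "croq_feasible m \<alpha> r \<rho>"
  shows "\<And>k. k \<in> {1..m} \<Longrightarrow> 0 \<le> r k * \<rho> k" and "(\<Sum>k=1..m. r k * \<rho> k) \<le> 1"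
  using assms unfolding croq_feasible_def by auto

lemma croq_feasible_product_le_1:
  assumes "croq_feasible m \<alpha> r \<rho>" and "k \<in> {1..m}"
  shows "r k * \<rho> k \<le> 1"
  using member_le_sum[of k "{1..m}" "\<lambda>k. r k * \<rho> k"] croq_feasible_products[OF assms(1)] assms(2)
  by auto

lemma croq_feasible_point_mass:
  assumes "1 \<le> m" and "0 \<le> \<alpha>"
  shows "croq_feasible m \<alpha> (\<lambda>k. if k = 1 then 1 else 0) (\<lambda>_. 1)"
  using assms by (simp add: croq_feasible_def sum.delta)

lemma croq_greedy_iff:
  assumes "1 \<le> m" and "0 \<le> \<alpha>"
  shows "croq_greedy m \<alpha> r \<rho> \<longleftrightarrow>
    croq_feasible m \<alpha> r \<rho> \<and> r 1 * \<rho> 1 = 1 \<and> (\<forall>k\<in>{2..m}. r k * \<rho> k = 0)"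
proof
  assume greedy: "croq_greedy m \<alpha> r \<rho>"
  then have feasible: "croq_feasible m \<alpha> r \<rho>"
    by (simp add: croq_greedy_def)
  have "1 \<le> r 1 * \<rho> 1"
    using greedy croq_feasible_point_mass[OF assms] assms(1)
    unfolding croq_greedy_def by fastforce
  then have q1: "r 1 * \<rho> 1 = 1" and sum_le: "(\<Sum>k=1..m. r k * \<rho> k) \<le> r 1 * \<rho> 1"
    using croq_feasible_product_le_1[OF feasible, of 1] croq_feasible_products(2)[OF feasible]
      assms(1) by auto
  have "r k * \<rho> k = 0" if "k \<in> {2..m}" for k
    using sum_nonneg_le_member_imp_zero[where K = "{1..m}" and q = "\<lambda>k. r k * \<rho> k" and k = 1]
      croq_feasible_products(1)[OF feasible] sum_le that assms(1) by auto
  with feasible q1 show "croq_feasible m \<alpha> r \<rho> \<and> r 1 * \<rho> 1 = 1 \<and> (\<forall>k\<in>{2..m}. r k * \<rho> k = 0)"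
    by blast
next
  assume "croq_feasible m \<alpha> r \<rho> \<and> r 1 * \<rho> 1 = 1 \<and> (\<forall>k\<in>{2..m}. r k * \<rho> k = 0)"
  then have feasible: "croq_feasible m \<alpha> r \<rho>" and q1: "r 1 * \<rho> 1 = 1"
    and q0: "\<And>k. k \<in> {2..m} \<Longrightarrow> r k * \<rho> k = 0"
    by auto
  have "r' k * \<rho>' k \<le> r k * \<rho> k"
    if feasible': "croq_feasible m \<alpha> r' \<rho>'" and k: "k \<in> {1..m}"
      and agree: "\<forall>j\<in>{1..<k}. r' j * \<rho>' j = r j * \<rho> j" for k r' \<rho>'
  proof (cases "k = 1")
    case True
    with q1 show ?thesis
      using croq_feasible_product_le_1[OF feasible' k] by simp
  next
    case False
    then have k2: "k \<in> {2..m}"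
      using k by auto
    have "(\<Sum>k=1..m. r' k * \<rho>' k) \<le> r' 1 * \<rho>' 1"
      using agree q1 k2 croq_feasible_products(2)[OF feasible'] by auto
    then have "r' k * \<rho>' k = 0"
      using croq_feasible_products(1)[OF feasible'] k2 assms(1)
      by (intro sum_nonneg_le_member_imp_zero[where K = "{1..m}" and q = "\<lambda>k. r' k * \<rho>' k"]) auto
    with q0[OF k2] show ?thesis
      by linarith
  qed
  then show "croq_greedy m \<alpha> r \<rho>"
    using feasible unfolding croq_greedy_def by blast
qed

lemma croq_greedy_point_mass:
  assumes "1 \<le> m" and "0 \<le> \<alpha>"
  shows "croq_greedy m \<alpha> (\<lambda>k. if k = 1 then 1 else 0) (\<lambda>_. 1)"
  using croq_feasible_point_mass[OF assms] croq_greedy_iff[OF assms] by simp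

lemma croq_greedy_maximizes:
  fixes f :: "nat \<Rightarrow> real"
  assumes "1 \<le> m" and "0 \<le> \<alpha>" and "croq_greedy m \<alpha> r \<rho>" and "croq_feasible m \<alpha> r' \<rho>'"
    and "\<And>k. k \<in> {1..m} \<Longrightarrow> f k \<le> f 1" and "0 \<le> f 1"
  shows "(\<Sum>k=1..m. r' k * \<rho>' k * f k) \<le> (\<Sum>k=1..m. r k * \<rho> k * f k)"
proof -
  have q1: "r 1 * \<rho> 1 = 1" and q0: "\<And>k. k \<in> {2..m} \<Longrightarrow> r k * \<rho> k = 0"
    using assms(3) croq_greedy_iff[OF assms(1,2)] by auto
  have "(\<Sum>k=1..m. r' k * \<rho>' k * f k) \<le> f 1"
    using assms(5,6) croq_feasible_products[OF assms(4)]
    by (intro sum_mult_le_bound[where q = "\<lambda>k. r' k * \<rho>' k"]) auto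
  also have "f 1 = r 1 * \<rho> 1 * f 1 + (\<Sum>k\<in>{1..m} - {1}. r k * \<rho> k * f k)"
    using q1 q0 by (simp add: sum.neutral)
  also have "\<dots> = (\<Sum>k=1..m. r k * \<rho> k * f k)"
    using assms(1) sum.remove[of "{1..m}" 1 "\<lambda>k. r k * \<rho> k * f k"] by simp
  finally show ?thesis .
qed

lemma croq_greedy_products_decreasing:
  assumes "1 \<le> m" and "0 \<le> \<alpha>" and "croq_greedy m \<alpha> r \<rho>" and "k \<in> {1..<m}"
  shows "r (k + 1) * \<rho> (k + 1) \<le> r k * \<rho> k"
proof -
  have "r (k + 1) * \<rho> (k + 1) = 0" and "croq_feasible m \<alpha> r \<rho>"
    using assms(3,4) croq_greedy_iff[OF assms(1,2)] by auto
  then show ?thesis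
    using croq_feasible_products(1) assms(4) by fastforce
qed

theorem proposition2:
  fixes M :: "'a measure" and m :: nat and \<alpha> :: real
    and ystar yhat yfin :: "'a \<Rightarrow> nat" and C :: "'a \<Rightarrow> nat set"
  assumes "prob_space M"
    and "m \<ge> 1"
    and "0 \<le> \<alpha>" and "\<alpha> \<le> 1"
    and "ystar \<in> measurable M (count_space UNIV)"
    and "yhat \<in> measurable M (count_space UNIV)"
    and "yfin \<in> measurable M (count_space UNIV)"
    and "C \<in> measurable M (count_space UNIV)"
    and "\<forall>\<omega>\<in>space M. ystar \<omega> \<in> {1..m}"
    and "\<forall>\<omega>\<in>space M. C \<omega> \<subseteq> {1..m}"
    and "\<forall>\<omega>\<in>space M. yfin \<omega> = ystar \<omega> \<longrightarrow> ystar \<omega> \<in> C \<omega> \<and> card (C \<omega>) \<ge> 1"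
  shows
    \<comment> \<open>(1)\<close>
    "measure M {\<omega> \<in> space M. yfin \<omega> = ystar \<omega>} - croq_acc M ystar yhat =
       (\<Sum>k=1..m. croq_r M C k * croq_rho M C ystar k * croq_fpost M C ystar yfin k)
         - croq_acc M ystar yhat
     \<comment> \<open>(2)\<close>
     \<and> ((\<forall>k\<in>{1..m}. 0 < croq_fpost M C ystar yfin k \<and>
            croq_acc M ystar yhat / (real m * croq_fpost M C ystar yfin k)
              < croq_r M C k * croq_rho M C ystar k)
         \<longrightarrow> measure M {\<omega> \<in> space M. yfin \<omega> = ystar \<omega>} - croq_acc M ystar yhat > 0)
     \<comment> \<open>(3)\<close>
     \<and> ((\<forall>i\<in>{1..m}. \<forall>j\<in>{1..m}. i \<le> j \<longrightarrow>
            croq_fpost M C ystar yfin j \<le> croq_fpost M C ystar yfin i)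
         \<longrightarrow> (\<exists>r \<rho>. croq_greedy m \<alpha> r \<rho>)
           \<and> (\<forall>r \<rho>. croq_greedy m \<alpha> r \<rho> \<longrightarrow>
                (\<forall>r' \<rho>'. croq_feasible m \<alpha> r' \<rho>' \<longrightarrow>
                   (\<Sum>k=1..m. r' k * \<rho>' k * croq_fpost M C ystar yfin k) - croq_acc M ystar yhat
                   \<le> (\<Sum>k=1..m. r k * \<rho> k * croq_fpost M C ystar yfin k) - croq_acc M ystar yhat)
                \<and> (\<forall>k\<in>{1..<m}. r (k+1) * \<rho> (k+1) \<le> r k * \<rho> k)))"
proof -
  let ?f = "croq_fpost M C ystar yfin"
  let ?a = "croq_acc M ystar yhat"
  let ?q = "\<lambda>k. croq_r M C k * croq_rho M C ystar k"
  have total: "measure M {\<omega> \<in> space M. yfin \<omega> = ystar \<omega>} = (\<Sum>k=1..m. ?q k * ?f k)"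
    using assms(10,11) by (intro croq_prob_correct_eq_sum assms(1,5,7,8)) auto
  have gain: "?a < (\<Sum>k=1..m. ?q k * ?f k)"
    if "\<forall>k\<in>{1..m}. 0 < ?f k \<and> ?a / (real m * ?f k) < ?q k"
    using that assms(2) sum_mult_gt_if_gt_divide_card[of "{1..m}" ?f ?a ?q] by simp
  have greedy_exists: "\<exists>r \<rho>. croq_greedy m \<alpha> r \<rho>"
    using croq_greedy_point_mass[OF assms(2,3)] by blast
  have greedy_optimal:
    "(\<Sum>k=1..m. r' k * \<rho>' k * ?f k) \<le> (\<Sum>k=1..m. r k * \<rho> k * ?f k)"
    if "\<forall>i\<in>{1..m}. \<forall>j\<in>{1..m}. i \<le> j \<longrightarrow> ?f j \<le> ?f i"
      and "croq_greedy m \<alpha> r \<rho>" and "croq_feasible m \<alpha> r' \<rho>'" for r \<rho> r' \<rho>'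
    using that assms(2)
    by (intro croq_greedy_maximizes[OF assms(2,3)]) (auto simp: croq_fpost_def cprob_nonneg)
  show ?thesis
    using total gain greedy_exists greedy_optimal croq_greedy_products_decreasing[OF assms(2,3)]
    by auto
qed

end
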